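(* Let $\Gamma = \{(x,y) \in \mathbb{R}^2 : y^2 = x^3 - x^2,\ x \neq 0\} \cup \{O\} \subset \mathbb{RP}^2$, where $O$ is the point at infinity lying on all lines parallel to the $y$-axis (and on the line at infinity). Define $\phi : \mathbb{R}/\mathbb{Z} \to \Gamma$ by $\phi(0) = O$ and, for $x \neq 0$, $\phi(x) = \left(\cot(\pi x)^2 + 1,\ \cot(\pi x)(\cot(\pi x)^2 + 1)\right)$. Then $\phi$ is a well-defined bijection, and for any three distinct elements $x, y, z \in \mathbb{R}/\mathbb{Z}$, the points $\phi(x), \phi(y), \phi(z)$ are collinear in $\mathbb{RP}^2$ if and only if $x + y + z = 0$ in $\mathbb{R}/\mathbb{Z}$. *)

theory Defs
  imports Complex_Main
begin

text \<open>Points of the real projective plane relevant here: an affine point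
  Some (x,y) = [x : y : 1], and None = O = [0 : 1 : 0], the point at infinity
  in the direction of the y-axis.\<close>
type_synonym pt = "(real \<times> real) option"

definition hom :: "pt \<Rightarrow> real \<times> real \<times> real" where
  "hom P = (case P of None \<Rightarrow> (0, 1, 0) | Some (x, y) \<Rightarrow> (x, y, 1))"

definition det3 :: "real \<times> real \<times> real \<Rightarrow> real \<times> real \<times> real \<Rightarrow> real \<times> real \<times> real \<Rightarrow> real" where
  "det3 u v w = (case u of (a1, a2, a3) \<Rightarrow> case v of (b1, b2, b3) \<Rightarrow> case w of (c1, c2, c3) \<Rightarrow>
      a1 * (b2 * c3 - b3 * c2) - a2 * (b1 * c3 - b3 * c1) + a3 * (b1 * c2 - b2 * c1))"

definition collinear_proj :: "pt \<Rightarrow> pt \<Rightarrow> pt \<Rightarrow> bool" where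
  "collinear_proj P Q R \<longleftrightarrow> det3 (hom P) (hom Q) (hom R) = 0"

definition Gamma :: "pt set" where
  "Gamma = {Some (x, y) | x y. y\<^sup>2 = x ^ 3 - x\<^sup>2 \<and> x \<noteq> 0} \<union> {None}"

text \<open>phi on representatives x in R of R/Z.\<close>
definition phi :: "real \<Rightarrow> pt" where
  "phi x = (if x \<in> \<int> then None
            else Some ((cot (pi * x))\<^sup>2 + 1, cot (pi * x) * ((cot (pi * x))\<^sup>2 + 1)))"

end

theory Submission
  imports Defs
begin

text \<open>The line \<open>y = t x\<close> through the isolated point \<open>(0,0)\<close> meets \<open>\<Gamma>\<close> in exactly one
  further point, \<open>(t\<^sup>2 + 1, t (t\<^sup>2 + 1))\<close>; this rational parametrization identifies
  \<open>\<Gamma> - {O}\<close> with the real line, and \<open>\<phi>\<close> is the parametrization composed with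
  \<open>t = cot (\<pi> x)\<close>, with \<open>O\<close> playing the role of \<open>t = \<infinity>\<close>. A determinant computation shows
  that three points with distinct parameters \<open>a, b, c\<close> are collinear iff \<open>ab + bc + ca = 1\<close>,
  and the identity \<open>sin (\<alpha> + \<beta> + \<gamma>) = sin \<alpha> sin \<beta> sin \<gamma> (cot \<alpha> cot \<beta> + cot \<beta> cot \<gamma> + cot \<gamma> cot \<alpha> - 1)\<close>
  turns this into \<open>x + y + z \<in> \<int>\<close>. Lines through \<open>O\<close> are vertical, and the vertical line
  through the point with parameter \<open>a\<close> meets \<open>\<Gamma>\<close> again exactly at parameter \<open>-a\<close>,
  i.e. at \<open>-x\<close>.\<close>

lemma sin_pi_times_eq_0_iff: "sin (pi * x) = 0 \<longleftrightarrow> x \<in> \<int>"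
  using sin_times_pi_eq_0[of x] by (simp add: mult.commute)

lemma cot_pi_times_eq_iff:
  assumes "x \<notin> \<int>" "y \<notin> \<int>"
  shows "cot (pi * x) = cot (pi * y) \<longleftrightarrow> x - y \<in> \<int>"
proof -
  have "sin (pi * x) \<noteq> 0" "sin (pi * y) \<noteq> 0"
    using assms by (simp_all add: sin_pi_times_eq_0_iff)
  then have "cot (pi * x) = cot (pi * y) \<longleftrightarrow> sin (pi * x) * cos (pi * y) - cos (pi * x) * sin (pi * y) = 0"
    by (auto simp: cot_def field_simps)
  also have "\<dots> \<longleftrightarrow> sin (pi * (x - y)) = 0"
    by (simp add: right_diff_distrib sin_diff)
  finally show ?thesis
    by (simp add: sin_pi_times_eq_0_iff)
qed

lemma cot_pi_times_surj: "\<exists>x. x \<notin> \<int> \<and> cot (pi * x) = t"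
proof -
  define x where "x = 1/2 - arctan t / pi"
  have "0 < x" "x < 1"
    using arctan_bounded[of t] pi_gt_zero unfolding x_def by (auto simp: field_simps)
  then have "x \<notin> \<int>"
    by (auto elim!: Ints_cases)
  moreover have "pi * x = pi / 2 - arctan t"
    unfolding x_def by (simp add: field_simps)
  then have "cot (pi * x) = t"
    by (simp add: cot_def sin_diff cos_diff) (metis tan_arctan tan_def)
  ultimately show ?thesis
    by blast
qed

lemma sin_add3_eq_cot:
  assumes "sin a \<noteq> 0" "sin b \<noteq> 0" "sin c \<noteq> 0"
  shows "sin (a + b + c) = sin a * sin b * sin c * (cot a * cot b + cot b * cot c + cot c * cot a - 1)"
  using assms by (simp add: cot_def sin_add cos_add field_simps)

lemma cot_pi_times_sum_eq_1_iff:
  assumes "x \<notin> \<int>" "y \<notin> \<int>" "z \<notin> \<int>"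
  shows "cot (pi * x) * cot (pi * y) + cot (pi * y) * cot (pi * z) + cot (pi * z) * cot (pi * x) = 1
           \<longleftrightarrow> x + y + z \<in> \<int>"
proof -
  have "sin (pi * x) \<noteq> 0" "sin (pi * y) \<noteq> 0" "sin (pi * z) \<noteq> 0"
    using assms by (simp_all add: sin_pi_times_eq_0_iff)
  then have "sin (pi * (x + y + z)) = 0 \<longleftrightarrow>
      cot (pi * x) * cot (pi * y) + cot (pi * y) * cot (pi * z) + cot (pi * z) * cot (pi * x) = 1"
    using sin_add3_eq_cot[of "pi * x" "pi * y" "pi * z"] by (simp add: distrib_left)
  then show ?thesis
    by (simp add: sin_pi_times_eq_0_iff)
qed

definition nodal_point :: "real \<Rightarrow> pt" where
  "nodal_point t = Some (t\<^sup>2 + 1, t * (t\<^sup>2 + 1))"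

lemma square_plus_one_pos: "0 < (t::real)\<^sup>2 + 1"
  using zero_le_power2[of t] by linarith

lemma nodal_point_inj: "inj nodal_point"
proof (rule inj_on_inverseI)
  show "snd (the (nodal_point t)) / fst (the (nodal_point t)) = t" for t
    using square_plus_one_pos[of t] by (simp add: nodal_point_def)
qed

lemma nodal_point_in_Gamma: "nodal_point t \<in> Gamma"
proof -
  have "(t * (t\<^sup>2 + 1))\<^sup>2 = (t\<^sup>2 + 1) ^ 3 - (t\<^sup>2 + 1)\<^sup>2"
    by (simp add: algebra_simps power2_eq_square power3_eq_cube)
  moreover have "t\<^sup>2 + 1 \<noteq> 0"
    using square_plus_one_pos[of t] by simp
  ultimately show ?thesis
    unfolding Gamma_def nodal_point_def by blast
qed

lemma Gamma_eq_range_nodal_point: "Gamma = insert None (range nodal_point)"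
proof (intro equalityI subsetI)
  fix P assume "P \<in> Gamma"
  then consider "P = None" | X Y where "P = Some (X, Y)" "Y\<^sup>2 = X ^ 3 - X\<^sup>2" "X \<noteq> 0"
    unfolding Gamma_def by auto
  then show "P \<in> insert None (range nodal_point)"
  proof cases
    case 2
    define t where "t = Y / X"
    have "Y\<^sup>2 / X\<^sup>2 = X - 1"
      using 2 by (simp add: field_simps power2_eq_square power3_eq_cube)
    then have "t\<^sup>2 + 1 = X"
      by (simp add: t_def power_divide)
    moreover have "t * X = Y"
      using 2 by (simp add: t_def)
    ultimately have "P = nodal_point t"
      using 2 by (simp add: nodal_point_def)
    then show ?thesis
      by blast
  qed simp
next
  fix P assume "P \<in> insert None (range nodal_point)"
  then show "P \<in> Gamma"
    using nodal_point_in_Gamma by (auto simp: Gamma_def)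
qed

lemma det3_cyclic: "det3 u v w = det3 v w u"
  by (cases u rule: prod_cases3, cases v rule: prod_cases3, cases w rule: prod_cases3)
     (simp add: det3_def algebra_simps)

lemma collinear_proj_cyclic: "collinear_proj P Q R \<longleftrightarrow> collinear_proj Q R P"
  unfolding collinear_proj_def by (rule arg_cong[where f = "\<lambda>d. d = 0"], rule det3_cyclic)

lemma collinear_nodal_points_iff:
  assumes "a \<noteq> b" "b \<noteq> c" "c \<noteq> a"
  shows "collinear_proj (nodal_point a) (nodal_point b) (nodal_point c) \<longleftrightarrow> a * b + b * c + c * a = 1"
proof -
  have "det3 (hom (nodal_point a)) (hom (nodal_point b)) (hom (nodal_point c))
      = (a - b) * (b - c) * (c - a) * (a * b + b * c + c * a - 1)"
    by (simp add: det3_def hom_def nodal_point_def) (simp add: algebra_simps power2_eq_square)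
  then have "collinear_proj (nodal_point a) (nodal_point b) (nodal_point c)
      \<longleftrightarrow> (a - b) * (b - c) * (c - a) * (a * b + b * c + c * a - 1) = 0"
    by (simp only: collinear_proj_def)
  also have "\<dots> \<longleftrightarrow> a * b + b * c + c * a = 1"
    using assms by simp
  finally show ?thesis .
qed

lemma collinear_nodal_points_None_iff:
  assumes "a \<noteq> b"
  shows "collinear_proj (nodal_point a) (nodal_point b) None \<longleftrightarrow> a = - b"
proof -
  have "det3 (hom (nodal_point a)) (hom (nodal_point b)) (hom None) = b\<^sup>2 - a\<^sup>2"
    by (simp add: det3_def hom_def nodal_point_def)
  then show ?thesis
    using assms by (auto simp: collinear_proj_def power2_eq_iff)
qed

lemma phi_eq_nodal_point: "phi x = (if x \<in> \<int> then None else nodal_point (cot (pi * x)))"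
  by (simp add: phi_def nodal_point_def)

lemma phi_eq_iff: "phi x = phi y \<longleftrightarrow> x - y \<in> \<int>"
proof (cases "x \<in> \<int>"; cases "y \<in> \<int>")
  assume "x \<notin> \<int>" "y \<notin> \<int>"
  then show ?thesis
    by (simp add: phi_eq_nodal_point inj_eq[OF nodal_point_inj] cot_pi_times_eq_iff)
qed (auto simp: phi_eq_nodal_point nodal_point_def)

lemma range_phi: "range phi = Gamma"
proof -
  have "nodal_point t \<in> range phi" for t
  proof -
    obtain x where "x \<notin> \<int>" "cot (pi * x) = t"
      using cot_pi_times_surj by blast
    then have "phi x = nodal_point t"
      by (simp add: phi_eq_nodal_point)
    then show ?thesis
      by (metis rangeI)
  qed
  moreover have "phi 0 = None"
    by (simp add: phi_def)
  ultimately have "insert None (range nodal_point) \<subseteq> range phi"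
    by (metis image_subsetI insert_subset rangeI)
  moreover have "range phi \<subseteq> insert None (range nodal_point)"
    by (auto simp: phi_eq_nodal_point)
  ultimately show ?thesis
    unfolding Gamma_eq_range_nodal_point by blast
qed

lemma collinear_phi_O_iff:
  assumes "z \<in> \<int>" "x \<notin> \<int>" "y \<notin> \<int>" "x - y \<notin> \<int>"
  shows "collinear_proj (phi x) (phi y) (phi z) \<longleftrightarrow> x + y + z \<in> \<int>"
proof -
  have "- y \<notin> \<int>" "cot (pi * x) \<noteq> cot (pi * y)"
    using assms by (simp_all add: cot_pi_times_eq_iff)
  then have "collinear_proj (phi x) (phi y) (phi z) \<longleftrightarrow> cot (pi * x) = cot (pi * - y)"
    using assms by (simp add: phi_eq_nodal_point collinear_nodal_points_None_iff)
  also have "\<dots> \<longleftrightarrow> x + y \<in> \<int>"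
    using cot_pi_times_eq_iff[of x "- y"] assms \<open>- y \<notin> \<int>\<close> by (simp del: cot_minus)
  finally show ?thesis
    using assms by simp
qed

lemma collinear_phi_affine_iff:
  assumes "x \<notin> \<int>" "y \<notin> \<int>" "z \<notin> \<int>" "x - y \<notin> \<int>" "y - z \<notin> \<int>" "z - x \<notin> \<int>"
  shows "collinear_proj (phi x) (phi y) (phi z) \<longleftrightarrow> x + y + z \<in> \<int>"
proof -
  have "cot (pi * x) \<noteq> cot (pi * y)" "cot (pi * y) \<noteq> cot (pi * z)" "cot (pi * z) \<noteq> cot (pi * x)"
    using assms cot_pi_times_eq_iff by blast+
  then show ?thesis
    using assms(1-3)
    by (simp add: phi_eq_nodal_point collinear_nodal_points_iff cot_pi_times_sum_eq_1_iff)
qed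

lemma collinear_phi_iff:
  assumes "x - y \<notin> \<int>" "y - z \<notin> \<int>" "x - z \<notin> \<int>"
  shows "collinear_proj (phi x) (phi y) (phi z) \<longleftrightarrow> x + y + z \<in> \<int>"
proof -
  have "z - x \<notin> \<int>"
    using assms(3) by (metis minus_diff_eq minus_in_Ints_iff)
  consider "z \<in> \<int>" | "x \<in> \<int>" | "y \<in> \<int>" | "x \<notin> \<int>" "y \<notin> \<int>" "z \<notin> \<int>"
    by blast
  then show ?thesis
  proof cases
    case 1
    then show ?thesis
      using assms by (intro collinear_phi_O_iff) auto
  next
    case 2
    then have "collinear_proj (phi y) (phi z) (phi x) \<longleftrightarrow> y + z + x \<in> \<int>"
      using assms by (intro collinear_phi_O_iff) auto
    then show ?thesis
      by (simp add: collinear_proj_cyclic[of "phi x"] add_ac)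
  next
    case 3
    then have "collinear_proj (phi z) (phi x) (phi y) \<longleftrightarrow> z + x + y \<in> \<int>"
      using assms \<open>z - x \<notin> \<int>\<close> by (intro collinear_phi_O_iff) auto
    then show ?thesis
      by (simp add: collinear_proj_cyclic[of "phi z"] add_ac)
  next
    case 4
    then show ?thesis
      using assms \<open>z - x \<notin> \<int>\<close> by (intro collinear_phi_affine_iff) auto
  qed
qed

theorem proposition4:
  shows "(\<forall>x y. x - y \<in> \<int> \<longrightarrow> phi x = phi y)
       \<and> (\<forall>x y. phi x = phi y \<longrightarrow> x - y \<in> \<int>)
       \<and> range phi = Gamma
       \<and> (\<forall>x y z. x - y \<notin> \<int> \<and> y - z \<notin> \<int> \<and> x - z \<notin> \<int> \<longrightarrow>
            (collinear_proj (phi x) (phi y) (phi z) \<longleftrightarrow> x + y + z \<in> \<int>))"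
  by (simp add: phi_eq_iff range_phi collinear_phi_iff)

end
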